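(* Let $g_1:\mathbb{R}^d\to[0,\infty)$ be differentiable almost everywhere, let $U$ be a $d\times d$ orthogonal matrix, and define $g_2(\bm z)=g_1(U\bm z)$. Assume that for each of $g_1,g_2$ the optimal drift equation $\nabla g(\bm z)/g(\bm z)=\bm z$ has a unique solution and that the Laplace importance sampling integrands $g_1^{\mathrm I},g_2^{\mathrm I}$ are well defined. Then there is an orthogonal matrix $V$ with $g_2^{\mathrm I}(\bm z)=g_1^{\mathrm I}(V\bm z)$ for all $\bm z$; consequently $g_1$ and $g_2$ have the same IS-active subspaces, and their analytic expressions in the $d$-dimensional IS-active subspace coincide: $g_1^{\mathrm{IA}}(\bm z)=g_2^{\mathrm{IA}}(\bm z)$.
   Context: Laplace importance sampling: for a nonnegative $g$, let $F(\bm z)=\ln g(\bm z)$, let $\bm\mu^*$ be the (assumed unique) solution of $\nabla g(\bm z)/g(\bm z)=\bm z$, let $\Gamma^*=\big(I_d-\nabla^2F(\bm\mu^* )\big)^{-1}$ (assumed to exist and be positive definite, with $F$ twice differentiable at $\bm\mu^*$), and let $L^*$ satisfy $L^*{L^*}^T=\Gamma^*$ (e.g. the Cholesky factor). The IS integrand is $g^{\mathrm I}(\bm z)=g(L^*\bm z+\bm\mu^* )\sqrt{\det\Gamma^*}\exp\!\big(\tfrac12\bm z^T\bm z-\tfrac12(L^*\bm z+\bm\mu^* )^T(L^*\bm z+\bm\mu^* )\big)$, so that $\mathbb{E}g(\bm Z)=\mathbb{E}g^{\mathrm I}(\bm Z)$ for $\bm Z\sim N(\bm 0,I_d)$. For an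 a.e. differentiable $h$, the gradient information matrix is $C=\mathbb{E}\big(\nabla h(\bm Z)\nabla h(\bm Z)^T\big)=Q\Lambda Q^T$ (eigendecomposition, $Q$ orthogonal, eigenvalues descending); the $r$-dimensional active subspace of $h$ is spanned by the first $r$ columns of $Q$. The IS-active subspaces of $g$ are the active subspaces of $g^{\mathrm I}$, and $g^{\mathrm{IA}}(\bm z):=g^{\mathrm I}(Q\bm z)$ with $Q$ the eigenvector matrix of the gradient information matrix of $g^{\mathrm I}$. Two functions related by $h_2(\bm z)=h_1(V\bm z)$, $V$ orthogonal, are said to have the same active subspaces when, identifying their coordinates as coordinates of the same vector in orthonormal bases related by $V$, the $r$-dimensional active subspaces coincide for every $r$, with eigenvector matrices chosen correspondingly ($Q_2=V^TQ_1$) in case of repeated eigenvalues. It is assumed the relevant gradient information matrices are finite. *)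

theory Defs
  imports "HOL-Analysis.Analysis"
begin

text \<open>Dimension d is the cardinality of the finite index type 'd; the index type carries
  a (well-)order so that "the first r columns" / "descending eigenvalues" make sense.\<close>

definition grad :: "(real^'d \<Rightarrow> real) \<Rightarrow> real^'d \<Rightarrow> real^'d" where
  "grad h z = (\<chi> i. frechet_derivative h (at z) (axis i 1))"

definition hess :: "(real^'d \<Rightarrow> real) \<Rightarrow> real^'d \<Rightarrow> real^'d^'d" where
  "hess F z = matrix (frechet_derivative (grad F) (at z))"

definition twice_differentiable_at :: "(real^'d \<Rightarrow> real) \<Rightarrow> real^'d \<Rightarrow> bool" where
  "twice_differentiable_at F mu \<longleftrightarrow>
     (\<forall>\<^sub>F z in nhds mu. F differentiable (at z)) \<and> grad F differentiable (at mu)"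

definition opt_drift :: "(real^'d \<Rightarrow> real) \<Rightarrow> real^'d \<Rightarrow> bool" where
  "opt_drift g mu \<longleftrightarrow> g mu \<noteq> 0 \<and> g differentiable (at mu) \<and> (1 / g mu) *\<^sub>R grad g mu = mu"

definition pos_def :: "real^'d^'d \<Rightarrow> bool" where
  "pos_def A \<longleftrightarrow> transpose A = A \<and> (\<forall>v. v \<noteq> 0 \<longrightarrow> v \<bullet> (A *v v) > 0)"

definition Gamma_star :: "(real^'d \<Rightarrow> real) \<Rightarrow> real^'d \<Rightarrow> real^'d^'d" where
  "Gamma_star g mu = matrix_inv (mat 1 - hess (\<lambda>z. ln (g z)) mu)"

definition laplace_IS_welldef :: "(real^'d \<Rightarrow> real) \<Rightarrow> real^'d \<Rightarrow> bool" where
  "laplace_IS_welldef g mu \<longleftrightarrow>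
     (\<forall>\<^sub>F z in nhds mu. g z > 0) \<and>
     twice_differentiable_at (\<lambda>z. ln (g z)) mu \<and>
     invertible (mat 1 - hess (\<lambda>z. ln (g z)) mu) \<and>
     pos_def (Gamma_star g mu)"

definition gI :: "(real^'d \<Rightarrow> real) \<Rightarrow> real^'d \<Rightarrow> real^'d^'d \<Rightarrow> real^'d \<Rightarrow> real" where
  "gI g mu L z = g (L *v z + mu) * sqrt (det (Gamma_star g mu)) *
      exp (1/2 * (z \<bullet> z) - 1/2 * ((L *v z + mu) \<bullet> (L *v z + mu)))"

definition std_normal_density :: "real^'d \<Rightarrow> real" where
  "std_normal_density z = (2 * pi) powr (- real CARD('d) / 2) * exp (- (z \<bullet> z) / 2)"

definition grad_info_matrix :: "(real^'d \<Rightarrow> real) \<Rightarrow> real^'d^'d" where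
  "grad_info_matrix h = (\<chi> i j. integral\<^sup>L lborel
       (\<lambda>z. grad h z $ i * grad h z $ j * std_normal_density z))"

definition grad_info_finite :: "(real^'d \<Rightarrow> real) \<Rightarrow> bool" where
  "grad_info_finite h \<longleftrightarrow> (\<forall>i j. integrable lborel
       (\<lambda>z. grad h z $ i * grad h z $ j * std_normal_density z))"

definition eigen_decomp :: "real^('d::{finite,wellorder})^('d::{finite,wellorder}) \<Rightarrow> real^('d::{finite,wellorder})^('d::{finite,wellorder}) \<Rightarrow> ('d::{finite,wellorder} \<Rightarrow> real) \<Rightarrow> bool" where
  "eigen_decomp C Q lam \<longleftrightarrow> orthogonal_matrix Q \<and>
     C = Q ** (\<chi> i j. if i = j then lam i else 0) ** transpose Q \<and>
     (\<forall>i j. i \<le> j \<longrightarrow> lam j \<le> lam i)"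

definition active_subspace :: "real^('d::{finite,wellorder})^('d::{finite,wellorder}) \<Rightarrow> nat \<Rightarrow> (real^('d::{finite,wellorder})) set" where
  "active_subspace Q r = span {column i Q | i. card {j. j < i} < r}"

end

theory Submission
  imports Defs
begin

(* Everything in the Laplace IS construction is equivariant under an orthogonal change of
   variables z = U x.  The drift equation for g2 = g1 o U is the U^T-image of the one for g1, so
   mu2 = U^T mu1, and Hess ln g2 (mu2) = U^T Hess ln g1 (mu1) U, whence Gamma2 = U^T Gamma1 U.
   Then U L2 and L1 are two square roots of Gamma1, so L1 V = U L2 for an orthogonal V, and
   substituting this into the definition of g^I (orthogonal maps preserve the quadratic terms and
   the determinant) gives g2^I = g1^I o V.  Finally, since the standard Gaussian is rotation
   invariant, the gradient information matrix of h o V is V^T C V, so eigendecompositions, and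
   with them the active subspaces, correspond under V^T. *)

(* Keep "transpose U *v x" as it is instead of the library's normal form "x v* U". *)
declare transpose_matrix_vector [simp del]

section \<open>Matrix inverses and orthogonal matrices\<close>

lemma
  fixes A :: "real^'n^'n"
  assumes "invertible A"
  shows matrix_inv_right: "A ** matrix_inv A = mat 1"
    and matrix_inv_left: "matrix_inv A ** A = mat 1"
proof -
  have "\<exists>A'. A ** A' = mat 1 \<and> A' ** A = mat 1"
    using assms by (simp add: invertible_def)
  then have "A ** matrix_inv A = mat 1 \<and> matrix_inv A ** A = mat 1"
    unfolding matrix_inv_def by (rule someI_ex)
  then show "A ** matrix_inv A = mat 1" "matrix_inv A ** A = mat 1" by auto
qed

lemma matrix_inv_unique:
  fixes A B :: "real^'n^'n"
  assumes "A ** B = mat 1"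
  shows "matrix_inv A = B"
proof -
  have "invertible A"
    using assms matrix_left_right_inverse invertible_def by blast
  then have "matrix_inv A = (matrix_inv A ** A) ** B"
    using assms by (simp flip: matrix_mul_assoc)
  then show ?thesis
    using matrix_inv_left[OF \<open>invertible A\<close>] by simp
qed

lemma matrix_inv_orthogonal_conj:
  fixes U M :: "real^'n^'n"
  assumes U: "orthogonal_matrix U" and M: "invertible M"
  shows "matrix_inv (transpose U ** M ** U) = transpose U ** matrix_inv M ** U"
proof (rule matrix_inv_unique)
  have "(transpose U ** M ** U) ** (transpose U ** matrix_inv M ** U)
      = transpose U ** M ** (U ** transpose U) ** matrix_inv M ** U"
    by (simp only: matrix_mul_assoc)
  also have "\<dots> = transpose U ** U"
    using U M by (simp add: orthogonal_matrix_def matrix_inv_right flip: matrix_mul_assoc)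
  also have "\<dots> = mat 1"
    using U by (simp add: orthogonal_matrix_def)
  finally show "(transpose U ** M ** U) ** (transpose U ** matrix_inv M ** U) = mat 1" .
qed

lemma orthogonal_matrix_inner:
  fixes V :: "real^'n^'n"
  assumes "orthogonal_matrix V"
  shows "(V *v x) \<bullet> (V *v y) = x \<bullet> y"
proof -
  have "orthogonal_transformation (\<lambda>x. V *v x)"
    using assms by (simp add: orthogonal_transformation_matrix)
  then show ?thesis
    unfolding orthogonal_transformation_def by blast
qed

lemma orthogonal_conj_cancel:
  fixes U A :: "real^'n^'n"
  assumes "orthogonal_matrix U"
  shows "U ** (transpose U ** A ** U) ** transpose U = A"
proof -
  have "U ** (transpose U ** A ** U) ** transpose U = (U ** transpose U) ** A ** (U ** transpose U)"
    by (simp only: matrix_mul_assoc)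
  then show ?thesis
    using assms by (simp add: orthogonal_matrix_def)
qed

lemma det_orthogonal_conj:
  fixes U A :: "real^'n^'n"
  assumes "orthogonal_matrix U"
  shows "det (transpose U ** A ** U) = det A"
proof -
  have "det U * det U = 1"
    using det_orthogonal_matrix[OF assms] by auto
  then show ?thesis
    by (simp add: det_mul)
qed

lemma same_gram_orthogonal_factor:
  fixes A B :: "real^'n^'n"
  assumes A: "invertible A" and gram: "A ** transpose A = B ** transpose B"
  obtains V where "orthogonal_matrix V" "A ** V = B"
proof -
  define V where "V = matrix_inv A ** B"
  have "V ** transpose V = matrix_inv A ** (A ** transpose A) ** transpose (matrix_inv A)"
    by (simp add: V_def gram matrix_transpose_mul matrix_mul_assoc)
  also have "\<dots> = (matrix_inv A ** A) ** transpose (matrix_inv A ** A)"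
    by (simp only: matrix_transpose_mul matrix_mul_assoc)
  also have "\<dots> = mat 1"
    using A by (simp add: matrix_inv_left)
  finally have "orthogonal_matrix V"
    using matrix_left_right_inverse orthogonal_matrix_def by blast
  moreover have "A ** V = B"
    using A by (simp add: V_def matrix_mul_assoc matrix_inv_right)
  ultimately show ?thesis by (rule that)
qed

lemma orthogonal_matrix_vector_mul_transpose:
  "orthogonal_matrix U \<Longrightarrow> U *v (transpose U *v x) = x" for U :: "real^'n^'n"
  by (simp add: orthogonal_matrix_def matrix_vector_mul_assoc)

lemma invertible_orthogonal_matrix:
  "orthogonal_matrix V \<Longrightarrow> invertible V" for V :: "real^'n^'n"
  unfolding orthogonal_matrix_def invertible_def by blast

lemma matrix_diff_ldistrib: "(A::real^'n^'m) ** (B - C) = A ** B - A ** C"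
  by (simp add: vec_eq_iff matrix_matrix_mult_def sum_subtractf algebra_simps)

lemma matrix_diff_rdistrib: "((B::real^'n^'m) - C) ** A = B ** A - C ** A"
  by (simp add: vec_eq_iff matrix_matrix_mult_def sum_subtractf algebra_simps)

lemma column_matrix_mul: "column i (A ** Q) = A *v column i Q"
  by (simp add: column_def matrix_matrix_mult_def matrix_vector_mult_def vec_eq_iff)

section \<open>Gradients and Hessians under linear changes of variables\<close>

lemma has_derivative_matrix_vector_mul:
  "((\<lambda>z. A *v z) has_derivative (\<lambda>v. A *v v)) F" for A :: "real^'n^'m"
  by (simp add: bounded_linear_imp_has_derivative)

lemma has_derivative_inner_grad:
  fixes f :: "real^'n \<Rightarrow> real"
  assumes "(f has_derivative D) (at z)"
  shows "D v = grad f z \<bullet> v"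
proof -
  have lin: "linear D"
    using assms has_derivative_linear by blast
  have "D v = D (\<Sum>i\<in>UNIV. v $ i *\<^sub>R axis i 1)"
    using basis_expansion[of v] by (simp add: scalar_mult_eq_scaleR)
  also have "\<dots> = (\<Sum>i\<in>UNIV. v $ i * D (axis i 1))"
    using lin by (simp add: linear_sum linear_scale)
  also have "\<dots> = grad f z \<bullet> v"
    using frechet_derivative_at[OF assms]
    by (simp add: grad_def inner_vec_def mult.commute)
  finally show ?thesis .
qed

lemma inner_matrix_vector_mul_axis:
  fixes A :: "real^'n^'n"
  shows "d \<bullet> (A *v axis i 1) = (transpose A *v d) $ i"
proof -
  have "(A *v axis i 1) $ j = A $ j $ i" for j
    by (simp add: matrix_vector_mult_basis column_def)
  then show ?thesis
    by (simp add: inner_vec_def matrix_vector_mult_def transpose_def mult.commute)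
qed

lemma
  fixes f :: "real^'n \<Rightarrow> real" and A :: "real^'n^'n"
  assumes "f differentiable (at (A *v z))"
  shows differentiable_compose_matrix: "(\<lambda>z. f (A *v z)) differentiable (at z)"
    and grad_compose_matrix: "grad (\<lambda>z. f (A *v z)) z = transpose A *v grad f (A *v z)"
proof -
  obtain D where D: "(f has_derivative D) (at (A *v z))"
    using assms by (auto simp: differentiable_def)
  have comp: "((\<lambda>z. f (A *v z)) has_derivative (\<lambda>v. D (A *v v))) (at z)"
    using has_derivative_compose[OF has_derivative_matrix_vector_mul D] by simp
  then show "(\<lambda>z. f (A *v z)) differentiable (at z)"
    by (auto simp: differentiable_def)
  show "grad (\<lambda>z. f (A *v z)) z = transpose A *v grad f (A *v z)"
    unfolding vec_eq_iff
  proof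
    fix i
    have "grad (\<lambda>z. f (A *v z)) z $ i = D (A *v axis i 1)"
      by (simp add: grad_def frechet_derivative_at[OF comp, symmetric])
    also have "\<dots> = (transpose A *v grad f (A *v z)) $ i"
      by (simp add: has_derivative_inner_grad[OF D] inner_matrix_vector_mul_axis)
    finally show "grad (\<lambda>z. f (A *v z)) z $ i = (transpose A *v grad f (A *v z)) $ i" .
  qed
qed

lemma eventually_nhds_matrix_vector_mul:
  fixes A :: "real^'n^'n"
  assumes "eventually P (nhds (A *v z))"
  shows "eventually (\<lambda>x. P (A *v x)) (nhds z)"
proof -
  obtain S where S: "open S" "A *v z \<in> S" "\<forall>x\<in>S. P x"
    using assms unfolding eventually_nhds by blast
  have "open ((\<lambda>x. A *v x) -` S)"
    using S(1) by (intro continuous_open_vimage linear_continuous_at) auto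
  then show ?thesis
    unfolding eventually_nhds using S by (intro exI[of _ "(\<lambda>x. A *v x) -` S"]) auto
qed

lemma hess_compose_matrix:
  fixes F :: "real^'n \<Rightarrow> real" and A :: "real^'n^'n"
  assumes "twice_differentiable_at F (A *v z)"
  shows "hess (\<lambda>z. F (A *v z)) z = transpose A ** hess F (A *v z) ** A"
proof -
  obtain D where D: "(grad F has_derivative D) (at (A *v z))"
    using assms by (auto simp: twice_differentiable_at_def differentiable_def)
  have "\<forall>\<^sub>F x in nhds z. F differentiable (at (A *v x))"
    using assms eventually_nhds_matrix_vector_mul by (auto simp: twice_differentiable_at_def)
  then have "\<forall>\<^sub>F x in nhds z. grad (\<lambda>z. F (A *v z)) x = transpose A *v grad F (A *v x)"
    by (rule eventually_mono) (rule grad_compose_matrix)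
  then obtain S where S: "open S" "z \<in> S"
      "\<forall>x\<in>S. grad (\<lambda>z. F (A *v z)) x = transpose A *v grad F (A *v x)"
    unfolding eventually_nhds by blast
  have "((\<lambda>x. transpose A *v grad F (A *v x)) has_derivative (\<lambda>v. transpose A *v D (A *v v))) (at z)"
    using has_derivative_compose[OF has_derivative_matrix_vector_mul D]
    by (intro bounded_linear.has_derivative[OF matrix_vector_mul_bounded_linear]) simp
  then have "(grad (\<lambda>z. F (A *v z)) has_derivative
      (\<lambda>v. transpose A *v D (A *v v))) (at z)"
    by (rule has_derivative_transform_within_open[OF _ S(1,2)]) (use S(3) in auto)
  then have "hess (\<lambda>z. F (A *v z)) z = matrix ((\<lambda>v. transpose A *v v) \<circ> D \<circ> (\<lambda>v. A *v v))"
    by (simp add: hess_def frechet_derivative_at[symmetric] o_def)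
  also have "\<dots> = transpose A ** matrix D ** A"
    using has_derivative_linear[OF D]
    by (simp only: matrix_compose linear_compose matrix_vector_mul_linear matrix_of_matrix_vector_mul)
  also have "\<dots> = transpose A ** hess F (A *v z) ** A"
    by (simp add: hess_def frechet_derivative_at[OF D, symmetric])
  finally show ?thesis .
qed

section \<open>Orthogonal equivariance of the Laplace IS construction\<close>

lemma invertible_Gamma_star:
  assumes "laplace_IS_welldef g mu"
  shows "invertible (Gamma_star g mu)"
  using assms matrix_inv_left matrix_inv_right
  unfolding laplace_IS_welldef_def Gamma_star_def invertible_def by blast

lemma opt_drift_compose_orthogonal:
  fixes g :: "real^'n \<Rightarrow> real" and U :: "real^'n^'n"
  assumes U: "orthogonal_matrix U" and drift: "opt_drift g mu"
  shows "opt_drift (\<lambda>z. g (U *v z)) (transpose U *v mu)"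
proof -
  note UUt = orthogonal_matrix_vector_mul_transpose[OF U]
  have diff: "g differentiable (at (U *v (transpose U *v mu)))"
    using drift UUt by (simp add: opt_drift_def)
  show ?thesis
    using drift differentiable_compose_matrix[OF diff] grad_compose_matrix[OF diff]
    unfolding opt_drift_def UUt by (simp flip: matrix_vector_mult_scaleR)
qed

lemma Gamma_star_compose_orthogonal:
  fixes g :: "real^'n \<Rightarrow> real" and U :: "real^'n^'n"
  assumes U: "orthogonal_matrix U" and wd: "laplace_IS_welldef g mu"
  shows "Gamma_star (\<lambda>z. g (U *v z)) (transpose U *v mu) = transpose U ** Gamma_star g mu ** U"
proof -
  define H where "H = hess (\<lambda>z. ln (g z)) mu"
  have "hess (\<lambda>z. ln (g (U *v z))) (transpose U *v mu) = transpose U ** H ** U"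
    using hess_compose_matrix[of "\<lambda>z. ln (g z)" U] wd
    by (simp add: H_def laplace_IS_welldef_def orthogonal_matrix_vector_mul_transpose[OF U])
  then have "mat 1 - hess (\<lambda>z. ln (g (U *v z))) (transpose U *v mu) = transpose U ** (mat 1 - H) ** U"
    using U by (simp add: matrix_diff_ldistrib matrix_diff_rdistrib orthogonal_matrix)
  moreover have "invertible (mat 1 - H)"
    using wd by (simp add: laplace_IS_welldef_def H_def)
  ultimately show ?thesis
    unfolding Gamma_star_def H_def[symmetric] by (simp add: matrix_inv_orthogonal_conj[OF U])
qed

lemma gI_compose_orthogonal:
  fixes g :: "real^'n \<Rightarrow> real" and U V L1 L2 :: "real^'n^'n"
  assumes U: "orthogonal_matrix U" and V: "orthogonal_matrix V"
    and L: "L1 ** V = U ** L2"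
    and Gamma: "Gamma_star (\<lambda>z. g (U *v z)) (transpose U *v mu) = transpose U ** Gamma_star g mu ** U"
  shows "gI (\<lambda>z. g (U *v z)) (transpose U *v mu) L2 z = gI g mu L1 (V *v z)"
proof -
  have arg: "L1 *v (V *v z) + mu = U *v (L2 *v z + transpose U *v mu)"
    using L orthogonal_matrix_vector_mul_transpose[OF U]
    by (simp add: matrix_vector_mul_assoc matrix_vector_right_distrib)
  show ?thesis
    unfolding gI_def Gamma det_orthogonal_conj[OF U] arg orthogonal_matrix_inner[OF U]
      orthogonal_matrix_inner[OF V] ..
qed

lemma gI_differentiable:
  fixes g :: "real^'n \<Rightarrow> real" and L :: "real^'n^'n"
  assumes "g differentiable (at (L *v x + mu))"
  shows "gI g mu L differentiable (at x)"
proof -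
  have affine: "(\<lambda>y. A *v y + c) differentiable (at x)" for A :: "real^'n^'n" and c
    by (intro differentiable_add bounded_linear_imp_differentiable matrix_vector_mul_bounded_linear
        differentiable_const)
  have square: "(\<lambda>y. (A *v y + c) \<bullet> (A *v y + c)) differentiable (at x)" for A :: "real^'n^'n" and c
    using differentiable_inner[OF affine affine] by simp
  have exp: "exp differentiable (at t)" for t :: real
    using DERIV_exp[of t] by (auto simp: differentiable_def has_field_derivative_def)
  have "(\<lambda>y. g (L *v y + mu)) differentiable (at x)"
    using differentiable_chain_at[OF affine assms] by (simp add: o_def)
  moreover have "(\<lambda>y. 1/2 * (y \<bullet> y) - 1/2 * ((L *v y + mu) \<bullet> (L *v y + mu))) differentiable (at x)"
    using square[of "mat 1" 0] square[of L mu]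
    by (intro differentiable_diff differentiable_mult differentiable_const) auto
  ultimately show ?thesis
    unfolding gI_def[abs_def] by (intro differentiable_mult differentiable_compose[OF exp] differentiable_const)
qed

section \<open>Lebesgue measure under linear changes of variables\<close>

lemma borel_measurable_matrix_vector_mul:
  "(\<lambda>x. A *v x) \<in> borel_measurable borel" for A :: "real^'n^'m"
  by (intro borel_measurable_continuous_onI linear_continuous_on matrix_vector_mul_bounded_linear)

lemma lborel_distr_orthogonal:
  fixes V :: "real^('n::{finite,wellorder})^('n::{finite,wellorder})"
  assumes V: "orthogonal_matrix V"
  shows "distr lborel borel (\<lambda>x. V *v x) = lborel"
proof (rule lborel_eqI[symmetric])
  fix l u :: "real^('n::{finite,wellorder})"
  assume le: "\<And>b. b \<in> Basis \<Longrightarrow> l \<bullet> b \<le> u \<bullet> b"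
  have preimage: "(\<lambda>x. V *v x) -` box l u = (\<lambda>x. transpose V *v x) ` box l u"
    using V by (auto simp: orthogonal_matrix_def matrix_vector_mul_assoc image_iff intro!: bexI[of _ "V *v _"])
  have orth: "orthogonal_transformation (\<lambda>x. transpose V *v x)"
    using V by (simp add: orthogonal_transformation_matrix)
  have "(\<lambda>x. V *v x) -` box l u \<in> sets borel"
    using borel_measurable_matrix_vector_mul[of V] by (simp add: measurable_sets_borel)
  then have "emeasure (distr lborel borel (\<lambda>x. V *v x)) (box l u)
        = emeasure lebesgue ((\<lambda>x. V *v x) -` box l u)"
    using borel_measurable_matrix_vector_mul[of V] by (simp add: emeasure_distr)
  also have "\<dots> = emeasure lebesgue ((\<lambda>x. transpose V *v x) ` box l u)"
    by (simp only: preimage)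
  also have "\<dots> = measure lebesgue (box l u)"
    using measurable_orthogonal_image[OF orth] measure_orthogonal_image[OF orth]
    by (simp add: emeasure_eq_measure2)
  also have "\<dots> = (\<Prod>b\<in>Basis. (u - l) \<bullet> b)"
    using le by simp
  finally show "emeasure (distr lborel borel (\<lambda>x. V *v x)) (box l u) = (\<Prod>b\<in>Basis. (u - l) \<bullet> b)" .
qed simp

lemma AE_lborel_affine:
  fixes A :: "real^('n::{finite,wellorder})^('n::{finite,wellorder})"
  assumes A: "invertible A" and P: "AE x in lborel. P x"
  shows "AE z in lborel. P (A *v z + b)"
proof -
  \<comment> \<open>the inverse affine map is differentiable, so it maps null sets to null sets\<close>
  obtain N where N: "{x \<in> space lborel. \<not> P x} \<subseteq> N" "N \<in> null_sets lborel"
    using P unfolding eventually_ae_filter by blast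
  define T where "T x = matrix_inv A *v (x - b)" for x
  have "negligible N"
    using N(2) by (simp add: negligible_iff_null_sets null_sets_completionI)
  moreover have "(T has_derivative (\<lambda>v. matrix_inv A *v v)) (at x)" for x
    unfolding T_def
    by (rule bounded_linear.has_derivative[OF matrix_vector_mul_bounded_linear])
      (auto intro!: derivative_eq_intros)
  then have "T differentiable_on N"
    by (metis differentiable_at_imp_differentiable_on differentiable_def)
  ultimately have "T ` N \<in> null_sets lebesgue"
    by (simp add: negligible_differentiable_image_negligible flip: negligible_iff_null_sets)
  moreover have "{z \<in> space lebesgue. \<not> P (A *v z + b)} \<subseteq> T ` N"
  proof
    fix z assume "z \<in> {z \<in> space lebesgue. \<not> P (A *v z + b)}"
    then have "A *v z + b \<in> N" using N(1) by auto
    moreover have "T (A *v z + b) = z"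
      using A by (simp add: T_def matrix_vector_mul_assoc matrix_inv_left)
    ultimately show "z \<in> T ` N" by (metis image_eqI)
  qed
  ultimately have "AE z in lebesgue. P (A *v z + b)" by (rule AE_I')
  then show ?thesis by (simp add: AE_completion_iff)
qed

lemma
  fixes V :: "real^('n::{finite,wellorder})^('n::{finite,wellorder})"
    and f :: "real^('n::{finite,wellorder}) \<Rightarrow> 'b::{banach, second_countable_topology}"
  assumes V: "orthogonal_matrix V" and f: "integrable lborel f"
  shows integrable_lborel_compose_orthogonal: "integrable lborel (\<lambda>z. f (V *v z))"
    and integral_lborel_compose_orthogonal: "(\<integral>z. f (V *v z) \<partial>lborel) = (\<integral>x. f x \<partial>lborel)"
proof -
  have meas_V: "(\<lambda>x. V *v x) \<in> measurable lborel borel"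
    using borel_measurable_matrix_vector_mul[of V] by simp
  have meas_f: "f \<in> borel_measurable borel"
    using borel_measurable_integrable[OF f] by simp
  show "integrable lborel (\<lambda>z. f (V *v z))"
    using f integrable_distr_eq[OF meas_V meas_f] lborel_distr_orthogonal[OF V] by simp
  show "(\<integral>z. f (V *v z) \<partial>lborel) = (\<integral>x. f x \<partial>lborel)"
    using integral_distr[OF meas_V meas_f] lborel_distr_orthogonal[OF V] by simp
qed

section \<open>Gradient information matrices and active subspaces\<close>

lemma std_normal_density_orthogonal:
  "orthogonal_matrix V \<Longrightarrow> std_normal_density (V *v z) = std_normal_density z"
  by (simp add: std_normal_density_def orthogonal_matrix_inner)

lemma grad_info_matrix_compose_orthogonal:
  fixes h :: "real^('n::{finite,wellorder}) \<Rightarrow> real"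
    and V :: "real^('n::{finite,wellorder})^('n::{finite,wellorder})"
  assumes V: "orthogonal_matrix V"
    and fin: "grad_info_finite h" and fin_V: "grad_info_finite (\<lambda>z. h (V *v z))"
    and diff: "AE x in lborel. h differentiable (at x)"
  shows "grad_info_matrix (\<lambda>z. h (V *v z)) = transpose V ** grad_info_matrix h ** V"
proof -
  define f where "f k l x = grad h x $ k * grad h x $ l * std_normal_density x" for k l x
  have int: "integrable lborel (f k l)" for k l
    using fin unfolding grad_info_finite_def f_def by blast
  have "grad_info_matrix (\<lambda>z. h (V *v z)) $ i $ j = (transpose V ** grad_info_matrix h ** V) $ i $ j"
    for i j
  proof -
    have "AE z in lborel. h differentiable (at (V *v z))"
      using AE_lborel_affine[OF invertible_orthogonal_matrix[OF V] diff, of 0] by simp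
    then have pointwise: "AE z in lborel.
        grad (\<lambda>z. h (V *v z)) z $ i * grad (\<lambda>z. h (V *v z)) z $ j * std_normal_density z
        = (\<Sum>k\<in>UNIV. \<Sum>l\<in>UNIV. V $ k $ i * V $ l $ j * f k l (V *v z))"
    proof eventually_elim
      case (elim z)
      have transpose_component: "(transpose V *v x) $ m = (\<Sum>k\<in>UNIV. V $ k $ m * x $ k)" for x m
        by (simp add: matrix_vector_mult_def transpose_def)
      show ?case
        unfolding grad_compose_matrix[OF elim] transpose_component f_def
          std_normal_density_orthogonal[OF V] sum_product sum_distrib_right
        by (intro sum.cong refl) (simp add: sum_distrib_left mult_ac)
    qed
    have "(\<lambda>z. grad (\<lambda>z. h (V *v z)) z $ i * grad (\<lambda>z. h (V *v z)) z $ j * std_normal_density z)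
        \<in> borel_measurable lborel"
      using fin_V unfolding grad_info_finite_def by blast
    moreover have "(\<lambda>z. \<Sum>k\<in>UNIV. \<Sum>l\<in>UNIV. V $ k $ i * V $ l $ j * f k l (V *v z))
        \<in> borel_measurable lborel"
      using integrable_lborel_compose_orthogonal[OF V int]
      by (intro borel_measurable_sum borel_measurable_times borel_measurable_const) auto
    ultimately have "grad_info_matrix (\<lambda>z. h (V *v z)) $ i $ j
        = (\<integral>z. (\<Sum>k\<in>UNIV. \<Sum>l\<in>UNIV. V $ k $ i * V $ l $ j * f k l (V *v z)) \<partial>lborel)"
      unfolding grad_info_matrix_def by (simp add: integral_cong_AE[OF _ _ pointwise])
    also have "\<dots> = (\<Sum>k\<in>UNIV. \<Sum>l\<in>UNIV. V $ k $ i * V $ l $ j * grad_info_matrix h $ k $ l)"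
      using integrable_lborel_compose_orthogonal[OF V int] integral_lborel_compose_orthogonal[OF V int]
      by (simp add: integral_sum integrable_sum grad_info_matrix_def f_def)
    also have "\<dots> = (transpose V ** grad_info_matrix h ** V) $ i $ j"
      by (subst sum.swap)
        (simp add: matrix_matrix_mult_def transpose_def sum_distrib_right sum_distrib_left mult_ac)
    finally show ?thesis .
  qed
  then show ?thesis
    by (simp add: vec_eq_iff)
qed

lemma eigen_decomp_orthogonal_conj:
  assumes V: "orthogonal_matrix V" and E: "eigen_decomp C Q lam"
  shows "eigen_decomp (transpose V ** C ** V) (transpose V ** Q) lam"
  using E V
  by (simp add: eigen_decomp_def orthogonal_matrix_mul matrix_transpose_mul matrix_mul_assoc)

lemma active_subspace_matrix_mul:
  fixes A Q :: "real^('n::{finite,wellorder})^('n::{finite,wellorder})"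
  shows "active_subspace (A ** Q) r = (\<lambda>x. A *v x) ` active_subspace Q r"
proof -
  have "{column i (A ** Q) | i. card {j. j < i} < r}
      = (\<lambda>x. A *v x) ` {column i Q | i. card {j. j < i} < r}"
    unfolding column_matrix_mul by blast
  then show ?thesis
    unfolding active_subspace_def
    by (simp add: real_vector.linear_span_image[OF matrix_vector_mul_linear])
qed

lemma active_subspaces_compose_orthogonal:
  fixes h1 h2 :: "real^('n::{finite,wellorder}) \<Rightarrow> real"
    and V :: "real^('n::{finite,wellorder})^('n::{finite,wellorder})"
  assumes V: "orthogonal_matrix V" and h: "h2 = (\<lambda>z. h1 (V *v z))"
    and C: "grad_info_matrix h2 = transpose V ** grad_info_matrix h1 ** V"
  shows "(\<forall>Q lam. eigen_decomp (grad_info_matrix h1) Q lam \<longrightarrow>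
            eigen_decomp (grad_info_matrix h2) (transpose V ** Q) lam \<and>
            (\<forall>r. active_subspace (transpose V ** Q) r = (\<lambda>x. transpose V *v x) ` active_subspace Q r) \<and>
            (\<forall>z. h1 (Q *v z) = h2 ((transpose V ** Q) *v z))) \<and>
         (\<forall>Q lam. eigen_decomp (grad_info_matrix h2) Q lam \<longrightarrow>
            eigen_decomp (grad_info_matrix h1) (V ** Q) lam \<and>
            (\<forall>r. active_subspace (V ** Q) r = (\<lambda>x. V *v x) ` active_subspace Q r) \<and>
            (\<forall>z. h1 ((V ** Q) *v z) = h2 (Q *v z)))"
proof -
  have VVt: "V ** transpose V = mat 1"
    using V orthogonal_matrix_def by blast
  have C': "grad_info_matrix h1 = transpose (transpose V) ** grad_info_matrix h2 ** transpose V"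
    unfolding C using orthogonal_conj_cancel[OF V] by simp
  show ?thesis
  proof (intro conjI allI impI)
    show "eigen_decomp (grad_info_matrix h2) (transpose V ** Q) lam"
      if "eigen_decomp (grad_info_matrix h1) Q lam" for Q lam
      unfolding C using V that by (rule eigen_decomp_orthogonal_conj)
    show "eigen_decomp (grad_info_matrix h1) (V ** Q) lam"
      if "eigen_decomp (grad_info_matrix h2) Q lam" for Q lam
      using eigen_decomp_orthogonal_conj[of "transpose V", OF _ that] V unfolding C' by simp
    show "h1 (Q *v z) = h2 ((transpose V ** Q) *v z)"
      for Q :: "real^('n::{finite,wellorder})^('n::{finite,wellorder})" and z
      by (simp add: h matrix_vector_mul_assoc matrix_mul_assoc VVt)
    show "h1 ((V ** Q) *v z) = h2 (Q *v z)"
      for Q :: "real^('n::{finite,wellorder})^('n::{finite,wellorder})" and z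
      by (simp add: h matrix_vector_mul_assoc)
  qed (rule active_subspace_matrix_mul)+
qed

theorem theorem3p6:
  fixes g1 :: "real^('d::{finite,wellorder}) \<Rightarrow> real"
    and U L1 L2 :: "real^('d::{finite,wellorder})^('d::{finite,wellorder})"
    and mu1 mu2 :: "real^('d::{finite,wellorder})"
  defines "g2 \<equiv> (\<lambda>z. g1 (U *v z))"
  assumes nonneg: "\<forall>z. g1 z \<ge> 0"
    and ae_diff: "AE z in lborel. g1 differentiable (at z)"
    and orthU: "orthogonal_matrix U"
    and drift1: "opt_drift g1 mu1" "\<forall>mu. opt_drift g1 mu \<longrightarrow> mu = mu1"
    and drift2: "opt_drift g2 mu2" "\<forall>mu. opt_drift g2 mu \<longrightarrow> mu = mu2"
    and wd1: "laplace_IS_welldef g1 mu1"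
    and wd2: "laplace_IS_welldef g2 mu2"
    and L1: "L1 ** transpose L1 = Gamma_star g1 mu1"
    and L2: "L2 ** transpose L2 = Gamma_star g2 mu2"
    and fin1: "grad_info_finite (gI g1 mu1 L1)"
    and fin2: "grad_info_finite (gI g2 mu2 L2)"
  shows "\<exists>V. orthogonal_matrix V \<and>
           (\<forall>z. gI g2 mu2 L2 z = gI g1 mu1 L1 (V *v z)) \<and>
           (\<forall>Q lam. eigen_decomp (grad_info_matrix (gI g1 mu1 L1)) Q lam \<longrightarrow>
              eigen_decomp (grad_info_matrix (gI g2 mu2 L2)) (transpose V ** Q) lam \<and>
              (\<forall>r. active_subspace (transpose V ** Q) r = (\<lambda>x. transpose V *v x) ` active_subspace Q r) \<and>
              (\<forall>z. gI g1 mu1 L1 (Q *v z) = gI g2 mu2 L2 ((transpose V ** Q) *v z))) \<and>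
           (\<forall>Q lam. eigen_decomp (grad_info_matrix (gI g2 mu2 L2)) Q lam \<longrightarrow>
              eigen_decomp (grad_info_matrix (gI g1 mu1 L1)) (V ** Q) lam \<and>
              (\<forall>r. active_subspace (V ** Q) r = (\<lambda>x. V *v x) ` active_subspace Q r) \<and>
              (\<forall>z. gI g1 mu1 L1 ((V ** Q) *v z) = gI g2 mu2 L2 (Q *v z)))"
proof -
  have mu2: "mu2 = transpose U *v mu1"
    using drift2(2) opt_drift_compose_orthogonal[OF orthU drift1(1)] unfolding g2_def by blast
  have Gamma2: "Gamma_star g2 mu2 = transpose U ** Gamma_star g1 mu1 ** U"
    unfolding g2_def mu2 by (rule Gamma_star_compose_orthogonal[OF orthU wd1])
  have "invertible (L1 ** transpose L1)"
    using invertible_Gamma_star[OF wd1] L1 by simp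
  then have "invertible L1"
    by (metis det_mul invertible_det_nz mult_zero_left)
  have "(U ** L2) ** transpose (U ** L2) = U ** (L2 ** transpose L2) ** transpose U"
    by (simp only: matrix_transpose_mul matrix_mul_assoc)
  then have gram: "L1 ** transpose L1 = (U ** L2) ** transpose (U ** L2)"
    unfolding L1 L2 Gamma2 orthogonal_conj_cancel[OF orthU] ..
  obtain V where V: "orthogonal_matrix V" "L1 ** V = U ** L2"
    using same_gram_orthogonal_factor[OF \<open>invertible L1\<close> gram] by blast
  have gI_eq: "gI g2 mu2 L2 = (\<lambda>z. gI g1 mu1 L1 (V *v z))"
    unfolding g2_def mu2
    by (rule ext) (rule gI_compose_orthogonal[OF orthU V Gamma2[unfolded g2_def mu2]])
  have "AE x in lborel. gI g1 mu1 L1 differentiable (at x)"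
    using AE_lborel_affine[OF \<open>invertible L1\<close> ae_diff] by (rule AE_mp) (auto intro: gI_differentiable)
  then have C: "grad_info_matrix (gI g2 mu2 L2) = transpose V ** grad_info_matrix (gI g1 mu1 L1) ** V"
    unfolding gI_eq by (rule grad_info_matrix_compose_orthogonal[OF V(1) fin1 fin2[unfolded gI_eq]])
  show ?thesis
  proof (intro exI[of _ V] conjI)
    show "orthogonal_matrix V" by (rule V(1))
    show "\<forall>z. gI g2 mu2 L2 z = gI g1 mu1 L1 (V *v z)" by (simp add: gI_eq)
  qed (use active_subspaces_compose_orthogonal[OF V(1) gI_eq C] in blast)+
qed

end
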